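(* Let $G=(V,E)$ be any finite simple graph and $\alpha\in\mathbb R$. For any self-avoiding path or cycle $\gamma \subset G$, $$\frac{Z(V \setminus \gamma)}{Z(V)} \leq \left( \frac{1}{1 + e^{- 2 \alpha}} \right)^{ \|\gamma \|/2},$$ where $V\setminus\gamma$ denotes $V$ minus the vertex set of $\gamma$ and $\|\gamma\|$ is the number of edges of $\gamma$.
   Context: For $U\subset V$, consider the subgraph induced by $U$ (vertices $U$, edges of $E$ with both endpoints in $U$). A permutation on $U$ is a bijection $\pi:U\to U$ with $\pi(x)=x$ or $\{x,\pi(x)\}\in E$ for all $x$; $\mathcal S_U$ is the set of them, and $Z(U)=\sum_{\pi\in\mathcal S_U}\exp(-\alpha\sum_{x\in U}\mathbb 1\{\pi(x)\neq x\})$, with $Z(\emptyset)=1$. A self-avoiding path is a finite directed subgraph with vertices enumerated $x^1,\dots,x^n$ and edges $(x^i,x^{i+1})$, $1\le i\le n-1$; a cycle additionally has the edge $(x^n,x^1)$. *)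

theory Defs
  imports Complex_Main "HOL-Combinatorics.Permutations"
begin

definition simple_graph :: "'a set \<Rightarrow> ('a \<Rightarrow> 'a \<Rightarrow> bool) \<Rightarrow> bool" where
  "simple_graph V E \<longleftrightarrow> finite V \<and> (\<forall>x y. E x y \<longrightarrow> x \<in> V \<and> y \<in> V)
     \<and> (\<forall>x y. E x y \<longrightarrow> E y x) \<and> (\<forall>x. \<not> E x x)"

definition graph_perms :: "('a \<Rightarrow> 'a \<Rightarrow> bool) \<Rightarrow> 'a set \<Rightarrow> ('a \<Rightarrow> 'a) set" where
  "graph_perms E U = {\<pi>. \<pi> permutes U \<and> (\<forall>x\<in>U. \<pi> x = x \<or> E x (\<pi> x))}"

definition Z :: "('a \<Rightarrow> 'a \<Rightarrow> bool) \<Rightarrow> real \<Rightarrow> 'a set \<Rightarrow> real" where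
  "Z E \<alpha> U = (\<Sum>\<pi>\<in>graph_perms E U. exp (- \<alpha> * real (card {x\<in>U. \<pi> x \<noteq> x})))"

definition sa_path :: "'a set \<Rightarrow> ('a \<Rightarrow> 'a \<Rightarrow> bool) \<Rightarrow> 'a list \<Rightarrow> bool" where
  "sa_path V E xs \<longleftrightarrow> xs \<noteq> [] \<and> distinct xs \<and> set xs \<subseteq> V
     \<and> (\<forall>i. Suc i < length xs \<longrightarrow> E (xs ! i) (xs ! Suc i))"

definition sa_cycle :: "'a set \<Rightarrow> ('a \<Rightarrow> 'a \<Rightarrow> bool) \<Rightarrow> 'a list \<Rightarrow> bool" where
  "sa_cycle V E xs \<longleftrightarrow> sa_path V E xs \<and> E (last xs) (hd xs)"

definition path_edges :: "'a list \<Rightarrow> nat" where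
  "path_edges xs = length xs - 1"

definition cycle_edges :: "'a list \<Rightarrow> nat" where
  "cycle_edges xs = length xs"

end

theory Submission
  imports Defs "HOL-Combinatorics.Cycles"
begin

text \<open>Write \<open>s = exp (- \<alpha>)\<close> and \<open>t = s\<^sup>2\<close>. Among the graph permutations of \<open>U\<close> are those
  fixing the first vertex \<open>x\<close> of a path, which extend graph permutations of \<open>U - {x}\<close>, and those
  swapping \<open>x\<close> with its successor \<open>y\<close>, which extend graph permutations of \<open>U - {x, y}\<close>; hence
  \<open>Z(U) \<ge> Z(U - {x}) + t Z(U - {x, y})\<close>. Iterating along a path \<open>\<gamma>\<close> with \<open>n\<close> vertices gives
  \<open>Z(U - \<gamma>) J\<^sub>n\<^sub>+\<^sub>1(t) \<le> Z(U)\<close> for the Jacobsthal polynomials \<open>J\<close>, and \<open>J\<^sub>n\<^sub>+\<^sub>1(t) \<ge> \<surd>(1 + t)^(n - 1)\<close>.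
  For a cycle \<open>a, b, \<dots>, c\<close> one may also swap \<open>a\<close> with \<open>c\<close> or rotate the whole cycle, so
  \<open>Z(U) \<ge> Z(U - {a}) + t Z(U - {a, b}) + t Z(U - {a, c}) + s\<^sup>n Z(U - \<gamma>)\<close>. Bounding the three
  path terms turns the right-hand side into \<open>(\<xi>\<^sup>n + \<zeta>\<^sup>n + s\<^sup>n) Z(U - \<gamma>)\<close>, with \<open>\<xi>, \<zeta>\<close> the roots
  of \<open>X\<^sup>2 = X + t\<close>, and \<open>\<xi> \<ge> \<surd>(1 + t)\<close>, \<open>|\<zeta>| \<le> s\<close>.\<close>

definition perm_weight :: "real \<Rightarrow> 'a set \<Rightarrow> ('a \<Rightarrow> 'a) \<Rightarrow> real" where
  "perm_weight \<alpha> U \<pi> = exp (- \<alpha>) ^ card {x\<in>U. \<pi> x \<noteq> x}"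

lemma Z_eq_sum_perm_weight: "Z E \<alpha> U = (\<Sum>\<pi>\<in>graph_perms E U. perm_weight \<alpha> U \<pi>)"
  by (simp add: Z_def perm_weight_def exp_of_nat_mult[symmetric] mult.commute)

lemma perm_weight_nonneg: "perm_weight \<alpha> U \<pi> \<ge> 0"
  by (simp add: perm_weight_def)

lemma perm_weight_id [simp]: "perm_weight \<alpha> U id = 1"
  by (simp add: perm_weight_def)

lemma finite_graph_perms: "finite U \<Longrightarrow> finite (graph_perms E U)"
  by (rule finite_subset[OF _ finite_permutations[of U]]) (auto simp: graph_perms_def)

lemma id_in_graph_perms: "id \<in> graph_perms E U"
  by (simp add: graph_perms_def)

lemma Z_pos: "finite U \<Longrightarrow> Z E \<alpha> U > 0"
  unfolding Z_eq_sum_perm_weight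
  by (rule sum_pos2[OF finite_graph_perms id_in_graph_perms]) (auto simp: perm_weight_def)

lemma Z_nonneg: "Z E \<alpha> U \<ge> 0"
  unfolding Z_eq_sum_perm_weight by (intro sum_nonneg perm_weight_nonneg)

lemma transpose_in_graph_perms:
  assumes "E x y" "E y x"
  shows "transpose x y \<in> graph_perms E {x, y}"
  using assms by (auto simp: graph_perms_def permutes_swap_id)

lemma perm_weight_transpose:
  "x \<noteq> y \<Longrightarrow> perm_weight \<alpha> {x, y} (transpose x y) = exp (- \<alpha>) ^ 2"
proof -
  assume "x \<noteq> y"
  then have "{z \<in> {x, y}. transpose x y z \<noteq> z} = {x, y}" by auto
  with \<open>x \<noteq> y\<close> show ?thesis by (simp add: perm_weight_def power2_eq_square)
qed

lemma cycle_of_list_along_edges: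
  assumes "distinct xs" "successively E (xs @ [hd xs])" "x \<in> set xs"
  shows "E x (cycle_of_list xs x)"
proof -
  obtain i where i: "i < length xs" "x = xs ! i" using assms(3) by (metis in_set_conv_nth)
  have "cycle_of_list xs x = map (cycle_of_list xs) xs ! i" using i by simp
  also have "\<dots> = rotate1 xs ! i" using cyclic_rotation[OF assms(1), of 1] by simp
  also have "\<dots> = (xs @ [hd xs]) ! Suc i" using i by (cases xs) auto
  finally have "cycle_of_list xs x = (xs @ [hd xs]) ! Suc i" .
  moreover have "x = (xs @ [hd xs]) ! i" using i by (simp add: nth_append)
  ultimately show ?thesis using successively_nth[OF assms(2)] i by simp
qed

lemma cycle_of_list_in_graph_perms:
  "distinct xs \<Longrightarrow> successively E (xs @ [hd xs]) \<Longrightarrow> cycle_of_list xs \<in> graph_perms E (set xs)"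
  by (auto simp: graph_perms_def cycle_permutes cycle_of_list_along_edges)

lemma perm_weight_cycle_of_list:
  assumes "distinct xs" "successively E (xs @ [hd xs])" "\<And>x. \<not> E x x"
  shows "perm_weight \<alpha> (set xs) (cycle_of_list xs) = exp (- \<alpha>) ^ length xs"
proof -
  have "{x \<in> set xs. cycle_of_list xs x \<noteq> x} = set xs"
    using cycle_of_list_along_edges[OF assms(1,2)] assms(3) by fastforce
  then show ?thesis using distinct_card[OF assms(1)] by (simp add: perm_weight_def)
qed

lemma graph_perms_compose:
  assumes "\<pi> \<in> graph_perms E A" "\<sigma> \<in> graph_perms E D" "A \<inter> D = {}"
  shows "\<pi> \<circ> \<sigma> \<in> graph_perms E (A \<union> D)"
    and "\<And>x. x \<in> D \<Longrightarrow> (\<pi> \<circ> \<sigma>) x = \<sigma> x"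
    and "finite A \<Longrightarrow> finite D \<Longrightarrow>
         perm_weight \<alpha> (A \<union> D) (\<pi> \<circ> \<sigma>) = perm_weight \<alpha> A \<pi> * perm_weight \<alpha> D \<sigma>"
proof -
  have \<pi>: "\<pi> permutes A" "\<forall>x\<in>A. \<pi> x = x \<or> E x (\<pi> x)"
    and \<sigma>: "\<sigma> permutes D" "\<forall>x\<in>D. \<sigma> x = x \<or> E x (\<sigma> x)"
    using assms(1,2) by (auto simp: graph_perms_def)
  have \<sigma>_on_A: "\<sigma> x = x" if "x \<in> A" for x
    using that assms(3) permutes_not_in[OF \<sigma>(1)] by blast
  have \<pi>_on_D: "\<pi> x = x" if "x \<in> D" for x
    using that assms(3) permutes_not_in[OF \<pi>(1)] by blast
  show \<sigma>_on_D: "(\<pi> \<circ> \<sigma>) x = \<sigma> x" if "x \<in> D" for x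
    using that permutes_in_image[OF \<sigma>(1)] \<pi>_on_D by simp
  have "(\<pi> \<circ> \<sigma>) permutes (A \<union> D)"
    by (rule permutes_compose[OF permutes_subset[OF \<sigma>(1)] permutes_subset[OF \<pi>(1)]]) auto
  then show "\<pi> \<circ> \<sigma> \<in> graph_perms E (A \<union> D)"
    using \<pi>(2) \<sigma>(2) \<sigma>_on_A \<sigma>_on_D by (auto simp: graph_perms_def)
  have "{x \<in> A \<union> D. (\<pi> \<circ> \<sigma>) x \<noteq> x} = {x \<in> A. \<pi> x \<noteq> x} \<union> {x \<in> D. \<sigma> x \<noteq> x}"
    using \<sigma>_on_A \<sigma>_on_D \<pi>_on_D by auto
  moreover have "{x \<in> A. \<pi> x \<noteq> x} \<inter> {x \<in> D. \<sigma> x \<noteq> x} = {}" using assms(3) by blast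
  ultimately show "finite A \<Longrightarrow> finite D \<Longrightarrow>
      perm_weight \<alpha> (A \<union> D) (\<pi> \<circ> \<sigma>) = perm_weight \<alpha> A \<pi> * perm_weight \<alpha> D \<sigma>"
    by (simp add: perm_weight_def card_Un_disjoint power_add)
qed

lemma sum_perm_weight_compose_right:
  assumes "finite U" "D \<subseteq> U" "\<sigma> \<in> graph_perms E D"
  shows "(\<lambda>\<pi>. \<pi> \<circ> \<sigma>) ` graph_perms E (U - D) \<subseteq> graph_perms E U"
    and "(\<Sum>f\<in>(\<lambda>\<pi>. \<pi> \<circ> \<sigma>) ` graph_perms E (U - D). perm_weight \<alpha> U f)
           = perm_weight \<alpha> D \<sigma> * Z E \<alpha> (U - D)"
proof -
  have U: "(U - D) \<union> D = U" and disj: "(U - D) \<inter> D = {}" using assms(2) by auto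
  show "(\<lambda>\<pi>. \<pi> \<circ> \<sigma>) ` graph_perms E (U - D) \<subseteq> graph_perms E U"
    using graph_perms_compose(1)[OF _ assms(3) disj] U by auto
  have "inj_on (\<lambda>\<pi>. \<pi> \<circ> \<sigma>) (graph_perms E (U - D))"
    using assms(3) permutes_surj[of \<sigma> D]
    by (intro inj_onI) (auto simp: graph_perms_def fun_eq_iff surj_def, metis)
  then have "(\<Sum>f\<in>(\<lambda>\<pi>. \<pi> \<circ> \<sigma>) ` graph_perms E (U - D). perm_weight \<alpha> U f)
      = (\<Sum>\<pi>\<in>graph_perms E (U - D). perm_weight \<alpha> U (\<pi> \<circ> \<sigma>))"
    by (simp add: sum.reindex)
  also have "\<dots> = (\<Sum>\<pi>\<in>graph_perms E (U - D). perm_weight \<alpha> (U - D) \<pi> * perm_weight \<alpha> D \<sigma>)"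
  proof (rule sum.cong[OF refl])
    fix \<pi> assume "\<pi> \<in> graph_perms E (U - D)"
    from graph_perms_compose(3)[OF this assms(3) disj, unfolded U]
    show "perm_weight \<alpha> U (\<pi> \<circ> \<sigma>) = perm_weight \<alpha> (U - D) \<pi> * perm_weight \<alpha> D \<sigma>"
      using assms(1,2) finite_subset by blast
  qed
  also have "\<dots> = perm_weight \<alpha> D \<sigma> * Z E \<alpha> (U - D)"
    by (simp add: Z_eq_sum_perm_weight sum_distrib_left mult.commute)
  finally show "(\<Sum>f\<in>(\<lambda>\<pi>. \<pi> \<circ> \<sigma>) ` graph_perms E (U - D). perm_weight \<alpha> U f)
           = perm_weight \<alpha> D \<sigma> * Z E \<alpha> (U - D)" .
qed

text \<open>A patch \<open>(D, \<sigma>)\<close> stands for the graph permutations of \<open>U\<close> that agree with \<open>\<sigma>\<close> on \<open>D\<close>,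
  i.e.\ the \<open>\<pi> \<circ> \<sigma>\<close> with \<open>\<pi>\<close> a graph permutation of \<open>U - D\<close>; patches that disagree
  somewhere on their common domain describe disjoint families.\<close>

lemma Z_ge_sum_patches:
  fixes P :: "('a set \<times> ('a \<Rightarrow> 'a)) set"
  assumes "finite U" "finite P"
    and patches: "\<And>D \<sigma>. (D, \<sigma>) \<in> P \<Longrightarrow> D \<subseteq> U \<and> \<sigma> \<in> graph_perms E D"
    and separated: "pairwise (\<lambda>(D, \<sigma>) (D', \<sigma>'). \<exists>x\<in>D \<inter> D'. \<sigma> x \<noteq> \<sigma>' x) P"
  shows "(\<Sum>(D, \<sigma>)\<in>P. perm_weight \<alpha> D \<sigma> * Z E \<alpha> (U - D)) \<le> Z E \<alpha> U"
proof -
  define family :: "'a set \<times> ('a \<Rightarrow> 'a) \<Rightarrow> ('a \<Rightarrow> 'a) set"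
    where "family = (\<lambda>(D, \<sigma>). (\<lambda>\<pi>. \<pi> \<circ> \<sigma>) ` graph_perms E (U - D))"
  have family_sub: "family (D, \<sigma>) \<subseteq> graph_perms E U" if "(D, \<sigma>) \<in> P" for D \<sigma>
    using sum_perm_weight_compose_right(1)[OF assms(1)] patches[OF that] by (simp add: family_def)
  have family_sum: "(\<Sum>f\<in>family (D, \<sigma>). perm_weight \<alpha> U f) = perm_weight \<alpha> D \<sigma> * Z E \<alpha> (U - D)"
    if "(D, \<sigma>) \<in> P" for D \<sigma>
    using sum_perm_weight_compose_right(2)[OF assms(1)] patches[OF that] by (simp add: family_def)
  have family_agrees: "f x = \<sigma> x"
    if f: "f \<in> family (D, \<sigma>)" and D\<sigma>: "(D, \<sigma>) \<in> P" and x: "x \<in> D" for f D \<sigma> x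
  proof -
    obtain \<pi> where \<pi>: "\<pi> \<in> graph_perms E (U - D)" and "f = \<pi> \<circ> \<sigma>" using f by (auto simp: family_def)
    moreover have "(U - D) \<inter> D = {}" by blast
    ultimately show ?thesis using graph_perms_compose(2)[OF \<pi> _ _ x] patches[OF D\<sigma>] by simp
  qed
  have family_disjoint: "family p \<inter> family q = {}" if pq_in: "p \<in> P" "q \<in> P" "p \<noteq> q" for p q
  proof -
    obtain D \<sigma> D' \<sigma>' where pq: "p = (D, \<sigma>)" "q = (D', \<sigma>')" by (cases p, cases q)
    obtain x where "x \<in> D \<inter> D'" "\<sigma> x \<noteq> \<sigma>' x"
      using pairwiseD(1)[OF separated pq_in] unfolding pq by auto
    then show ?thesis
      using family_agrees[of _ D \<sigma> x] family_agrees[of _ D' \<sigma>' x] pq_in(1,2) unfolding pq by auto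
  qed
  have family_finite: "finite (family p)" if "p \<in> P" for p
    using that family_sub finite_subset[OF _ finite_graph_perms[OF assms(1)]] by (cases p) blast
  have "(\<Sum>(D, \<sigma>)\<in>P. perm_weight \<alpha> D \<sigma> * Z E \<alpha> (U - D)) = (\<Sum>p\<in>P. \<Sum>f\<in>family p. perm_weight \<alpha> U f)"
    using family_sum by (intro sum.cong) auto
  also have "\<dots> = (\<Sum>f\<in>\<Union>(family ` P). perm_weight \<alpha> U f)"
    using assms(2) family_finite family_disjoint by (intro sum.UNION_disjoint[symmetric]) auto
  also have "\<dots> \<le> Z E \<alpha> U"
    unfolding Z_eq_sum_perm_weight using family_sub
    by (intro sum_mono2 finite_graph_perms assms(1) perm_weight_nonneg) auto
  finally show ?thesis .
qed

lemma Z_remove_vertex_le: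
  assumes "finite U" "x \<in> U"
  shows "Z E \<alpha> (U - {x}) \<le> Z E \<alpha> U"
  using Z_ge_sum_patches[of U "{({x}, id)}" E \<alpha>] assms by (simp add: id_in_graph_perms)

lemma Z_path_step:
  assumes "finite U" "x \<in> U" "y \<in> U" "x \<noteq> y" "E x y" "E y x"
  shows "Z E \<alpha> (U - {x}) + exp (- \<alpha>) ^ 2 * Z E \<alpha> (U - {x, y}) \<le> Z E \<alpha> U"
proof -
  let ?P = "{({x}, id), ({x, y}, transpose x y)}"
  have patches: "D \<subseteq> U \<and> \<sigma> \<in> graph_perms E D" if "(D, \<sigma>) \<in> ?P" for D \<sigma>
    using that assms by (auto simp: id_in_graph_perms transpose_in_graph_perms)
  have "pairwise (\<lambda>(D, \<sigma>) (D', \<sigma>'). \<exists>z\<in>D \<inter> D'. \<sigma> z \<noteq> \<sigma>' z) ?P"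
    using assms(4) by (auto simp: pairwise_def)
  from Z_ge_sum_patches[OF assms(1) _ patches this]
  have "(\<Sum>(D, \<sigma>)\<in>?P. perm_weight \<alpha> D \<sigma> * Z E \<alpha> (U - D)) \<le> Z E \<alpha> U" by simp
  moreover have "({x}, id) \<noteq> ({x, y}, transpose x y)" using assms(4) by auto
  ultimately show ?thesis using assms(4) by (simp add: perm_weight_transpose)
qed

lemma Z_cycle_step:
  fixes a b c :: 'a and ws :: "'a list"
  defines "xs \<equiv> a # b # ws @ [c]"
  assumes "finite U" "set xs \<subseteq> U" "distinct xs" "successively E (xs @ [a])"
    and "symp E" "\<And>x. \<not> E x x"
  shows "Z E \<alpha> (U - {a}) + exp (- \<alpha>) ^ 2 * Z E \<alpha> (U - {a, b})
      + exp (- \<alpha>) ^ 2 * Z E \<alpha> (U - {a, c}) + exp (- \<alpha>) ^ length xs * Z E \<alpha> (U - set xs)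
      \<le> Z E \<alpha> U"
proof -
  let ?\<sigma> = "cycle_of_list xs"
  have abc: "a \<noteq> b" "a \<noteq> c" "b \<noteq> c" "a \<in> set xs" "b \<in> set xs" "c \<in> set xs"
    using assms(4) by (auto simp: xs_def)
  have "successively E ((a # b # ws) @ [c, a])" using assms(5) by (simp add: xs_def)
  then have "E a b" "E c a" unfolding successively_append_iff by simp_all
  then have edges: "E a b" "E b a" "E a c" "E c a" using assms(6) by (auto dest: sympD)
  have closed: "successively E (xs @ [hd xs])" using assms(5) by (simp add: xs_def)
  have "map ?\<sigma> xs = rotate1 xs" using cyclic_rotation[OF assms(4), of 1] by simp
  then have \<sigma>_ac: "?\<sigma> a = b" "?\<sigma> c = a" by (simp_all add: xs_def)
  have "?\<sigma> b \<noteq> a"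
    using \<sigma>_ac(2) abc(3) permutes_inj[OF cycle_permutes[of xs]] by (metis injD)
  then have separated:
    "pairwise (\<lambda>(D, \<sigma>) (D', \<sigma>'). \<exists>z\<in>D \<inter> D'. \<sigma> z \<noteq> \<sigma>' z)
       {({a}, id), ({a, b}, transpose a b), ({a, c}, transpose a c), (set xs, ?\<sigma>)}"
    using abc \<sigma>_ac(1) by (auto simp: pairwise_def)
  have patches: "D \<subseteq> U \<and> \<sigma> \<in> graph_perms E D"
    if "(D, \<sigma>) \<in> {({a}, id), ({a, b}, transpose a b), ({a, c}, transpose a c), (set xs, ?\<sigma>)}"
    for D \<sigma>
    using that assms(3) abc edges cycle_of_list_in_graph_perms[OF assms(4) closed]
    by (auto simp: id_in_graph_perms transpose_in_graph_perms)
  have distinct_patches: "({a}, id) \<notin> {({a, b}, transpose a b), ({a, c}, transpose a c), (set xs, ?\<sigma>)}"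
    "({a, b}, transpose a b) \<notin> {({a, c}, transpose a c), (set xs, ?\<sigma>)}"
    "({a, c}, transpose a c) \<noteq> (set xs, ?\<sigma>)"
    using abc by (auto simp: insert_eq_iff doubleton_eq_iff)
  show ?thesis
    using Z_ge_sum_patches[OF assms(2) _ patches separated] distinct_patches abc
      perm_weight_cycle_of_list[OF assms(4) closed assms(7)]
    by (simp add: perm_weight_transpose add.assoc)
qed

fun jacobsthal :: "real \<Rightarrow> nat \<Rightarrow> real" where
  "jacobsthal t 0 = 0"
| "jacobsthal t (Suc 0) = 1"
| "jacobsthal t (Suc (Suc n)) = jacobsthal t (Suc n) + t * jacobsthal t n"

lemma sqrt_power_le_jacobsthal:
  assumes "t \<ge> 0"
  shows "sqrt (1 + t) ^ n \<le> jacobsthal t (Suc (Suc n))"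
proof (induction n rule: nat_less_induct)
  case (1 n)
  let ?q = "sqrt (1 + t)"
  have q: "?q \<ge> 1" "?q\<^sup>2 = 1 + t" using assms by simp_all
  have "?q * 1 \<le> ?q * ?q" by (rule mult_left_mono[OF q(1)]) (use q(1) in simp)
  then have q_le: "?q \<le> 1 + t" using q(2) by (simp add: power2_eq_square)
  consider "n = 0" | "n = 1" | m where "n = Suc (Suc m)" by (metis One_nat_def not0_implies_Suc)
  then show ?case
  proof cases
    case 3
    have "?q ^ n = ?q ^ m * (1 + t)" using q(2) by (simp add: 3 power2_eq_square)
    also have "\<dots> \<le> ?q ^ m * (?q + t)" using q(1) by (intro mult_left_mono) auto
    also have "\<dots> = ?q ^ Suc m + t * ?q ^ m" by (simp add: algebra_simps)
    also have "\<dots> \<le> jacobsthal t (Suc (Suc (Suc m))) + t * jacobsthal t (Suc (Suc m))"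
      using 1 assms by (intro add_mono mult_left_mono) (auto simp: 3)
    finally show ?thesis by (simp add: 3)
  qed (use q_le in auto)
qed

text \<open>\<open>\<xi>\<close> and \<open>\<zeta>\<close> are the roots of \<open>X\<^sup>2 = X + t\<close>, so the right-hand side is the
  Lucas sequence of the Jacobsthal recurrence.\<close>

lemma jacobsthal_lucas:
  assumes "\<xi> + \<zeta> = 1" "\<xi> * \<zeta> = - t"
  shows "jacobsthal t (Suc k) + 2 * t * jacobsthal t k = \<xi> ^ Suc k + \<zeta> ^ Suc k"
proof (induction k rule: nat_less_induct)
  case (1 k)
  have step: "x ^ Suc (Suc n) = x ^ Suc n + t * x ^ n" if "x\<^sup>2 = x + t" for x :: real and n
  proof -
    have "x ^ Suc (Suc n) = x\<^sup>2 * x ^ n" by (simp add: power2_eq_square)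
    with that show ?thesis by (simp add: algebra_simps)
  qed
  have "\<xi>\<^sup>2 = \<xi> * (\<xi> + \<zeta>) - \<xi> * \<zeta>" "\<zeta>\<^sup>2 = \<zeta> * (\<xi> + \<zeta>) - \<xi> * \<zeta>"
    by (simp_all add: power2_eq_square algebra_simps)
  then have squares: "\<xi>\<^sup>2 = \<xi> + t" "\<zeta>\<^sup>2 = \<zeta> + t" using assms by simp_all
  note roots = step[OF squares(1)] step[OF squares(2)]
  consider "k = 0" | "k = 1" | m where "k = Suc (Suc m)" by (metis One_nat_def not0_implies_Suc)
  then show ?case
  proof cases
    case 3
    have "jacobsthal t (Suc k) + 2 * t * jacobsthal t k
        = (jacobsthal t (Suc (Suc m)) + 2 * t * jacobsthal t (Suc m))
          + t * (jacobsthal t (Suc m) + 2 * t * jacobsthal t m)"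
      by (simp add: 3 algebra_simps)
    also have "\<dots> = (\<xi> ^ Suc (Suc m) + \<zeta> ^ Suc (Suc m)) + t * (\<xi> ^ Suc m + \<zeta> ^ Suc m)"
      using 1[rule_format, of "Suc m"] 1[rule_format, of m] by (simp add: 3 del: power_Suc)
    also have "\<dots> = \<xi> ^ Suc k + \<zeta> ^ Suc k"
      unfolding 3 roots[of "Suc m"] by (simp only: algebra_simps)
    finally show ?thesis .
  qed (use assms squares in \<open>auto simp: power2_eq_square\<close>)
qed

lemma sqrt_power_le_lucas:
  assumes "s \<ge> 0" "\<xi> + \<zeta> = 1" "\<xi> * \<zeta> = - s\<^sup>2" "\<xi> \<ge> 1"
  shows "sqrt (1 + s\<^sup>2) ^ n \<le> \<xi> ^ n + \<zeta> ^ n + s ^ n"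
proof -
  have \<zeta>: "\<zeta> = 1 - \<xi>" using assms(2) by simp
  have square: "\<xi> * (\<xi> - 1) = s\<^sup>2" using assms(3) by (simp add: \<zeta> algebra_simps)
  have "1 + s\<^sup>2 \<le> \<xi>\<^sup>2" using square assms(4) by (simp add: power2_eq_square algebra_simps)
  then have "sqrt (1 + s\<^sup>2) \<le> \<xi>" using assms(4) by (intro real_le_lsqrt) auto
  then have "sqrt (1 + s\<^sup>2) ^ n \<le> \<xi> ^ n" by (intro power_mono) auto
  moreover have "\<bar>\<zeta>\<bar> \<le> s"
  proof (rule ccontr)
    assume "\<not> \<bar>\<zeta>\<bar> \<le> s"
    then have "s < \<xi> - 1" using assms(4) by (simp add: \<zeta>)
    then have "s * s \<le> s * (\<xi> - 1)" "s * (\<xi> - 1) < \<xi> * (\<xi> - 1)"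
      using assms(1) by (auto intro: mult_left_mono mult_strict_right_mono)
    then show False using square by (simp add: power2_eq_square)
  qed
  then have "\<bar>\<zeta> ^ n\<bar> \<le> s ^ n" unfolding power_abs by (intro power_mono) auto
  ultimately show ?thesis by linarith
qed

lemma Z_diff_path_bound:
  assumes "finite U" "set xs \<subseteq> U" "distinct xs" "successively E xs" "symp E"
  shows "Z E \<alpha> (U - set xs) * jacobsthal (exp (- \<alpha>) ^ 2) (Suc (length xs)) \<le> Z E \<alpha> U"
  using assms
proof (induction xs arbitrary: U rule: induct_list012)
  case (2 x)
  then show ?case using Z_remove_vertex_le by simp
next
  case (3 x y zs)
  let ?t = "exp (- \<alpha>) ^ 2" and ?W = "U - set (x # y # zs)"
  have "E x y" "E y x" using "3.prems"(4,5) by (auto dest: sympD)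
  have W: "U - {x} - set (y # zs) = ?W" "U - {x, y} - set zs = ?W" by auto
  have "Z E \<alpha> ?W * jacobsthal ?t (Suc (length (y # zs))) \<le> Z E \<alpha> (U - {x})"
    using "3.IH"(2)[of "U - {x}"] "3.prems" unfolding W by auto
  moreover have "Z E \<alpha> ?W * jacobsthal ?t (Suc (length zs)) \<le> Z E \<alpha> (U - {x, y})"
    using "3.IH"(1)[of "U - {x, y}"] "3.prems" unfolding W by (auto simp: successively_Cons)
  ultimately have "Z E \<alpha> ?W * jacobsthal ?t (Suc (length (y # zs)))
      + ?t * (Z E \<alpha> ?W * jacobsthal ?t (Suc (length zs)))
      \<le> Z E \<alpha> (U - {x}) + ?t * Z E \<alpha> (U - {x, y})"
    by (intro add_mono mult_left_mono) auto
  then have "Z E \<alpha> ?W * jacobsthal ?t (Suc (length (x # y # zs)))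
      \<le> Z E \<alpha> (U - {x}) + ?t * Z E \<alpha> (U - {x, y})"
    by (simp add: algebra_simps)
  also have "\<dots> \<le> Z E \<alpha> U"
    using Z_path_step \<open>E x y\<close> \<open>E y x\<close> "3.prems"(1-3) by auto
  finally show ?case .
qed simp

lemma Z_diff_cycle_lucas_bound:
  fixes a b c :: 'a and ws :: "'a list"
  defines "xs \<equiv> a # b # ws @ [c]"
  assumes "finite U" "set xs \<subseteq> U" "distinct xs" "successively E (xs @ [a])"
    and "symp E" "\<And>x. \<not> E x x"
    and "\<xi> + \<zeta> = 1" "\<xi> * \<zeta> = - (exp (- \<alpha>) ^ 2)"
  shows "Z E \<alpha> (U - set xs) * (\<xi> ^ length xs + \<zeta> ^ length xs + exp (- \<alpha>) ^ length xs) \<le> Z E \<alpha> U"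
proof -
  let ?s = "exp (- \<alpha>)" and ?W = "Z E \<alpha> (U - set xs)" and ?n = "length xs"
  let ?J = "jacobsthal (?s ^ 2)" and ?k = "Suc (Suc (length ws))"
  have path: "?W * ?J (Suc (length ys)) \<le> Z E \<alpha> (U - D)"
    if "set ys \<union> D = set xs" "set ys \<inter> D = {}" "distinct ys" "successively E ys" for ys D
  proof -
    have "U - D - set ys = U - set xs" "set ys \<subseteq> U - D" using that(1,2) assms(3) by auto
    then show ?thesis
      using Z_diff_path_bound[of "U - D" ys E \<alpha>] assms(2,6) that(3,4) by auto
  qed
  have "successively E (a # b # ws @ [c])"
    using assms(5) unfolding xs_def successively_append_iff by blast
  then have chains: "successively E (b # ws @ [c])" "successively E (ws @ [c])" "successively E (b # ws)"
    using successively_append_iff[of E "b # ws" "[c]"] by (auto simp: successively_Cons)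
  have "?W * ?J (Suc ?k) \<le> Z E \<alpha> (U - {a})"
    using path[of "b # ws @ [c]" "{a}"] chains assms(4) by (auto simp: xs_def)
  moreover have "?W * ?J ?k \<le> Z E \<alpha> (U - {a, b})"
    using path[of "ws @ [c]" "{a, b}"] chains assms(4) by (auto simp: xs_def)
  moreover have "?W * ?J ?k \<le> Z E \<alpha> (U - {a, c})"
    using path[of "b # ws" "{a, c}"] chains assms(4) by (auto simp: xs_def)
  ultimately have "?W * ?J (Suc ?k) + ?s ^ 2 * (?W * ?J ?k) + ?s ^ 2 * (?W * ?J ?k) + ?s ^ ?n * ?W
      \<le> Z E \<alpha> (U - {a}) + ?s ^ 2 * Z E \<alpha> (U - {a, b}) + ?s ^ 2 * Z E \<alpha> (U - {a, c}) + ?s ^ ?n * ?W"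
    by (intro add_mono mult_left_mono order_refl) auto
  also have "\<dots> \<le> Z E \<alpha> U"
    using Z_cycle_step[of U a b ws c E \<alpha>] assms(2-7) unfolding xs_def by simp
  finally have cycle_sum:
    "?W * ?J (Suc ?k) + ?s ^ 2 * (?W * ?J ?k) + ?s ^ 2 * (?W * ?J ?k) + ?s ^ ?n * ?W \<le> Z E \<alpha> U" .
  have lucas: "?J (Suc ?k) + 2 * ?s ^ 2 * ?J ?k = \<xi> ^ ?n + \<zeta> ^ ?n"
    using jacobsthal_lucas[OF assms(8,9), of ?k] by (simp add: xs_def del: jacobsthal.simps)
  show ?thesis
    using cycle_sum unfolding lucas[symmetric] by (simp add: algebra_simps del: jacobsthal.simps)
qed

lemma Z_diff_cycle_bound:
  assumes "finite U" "set xs \<subseteq> U" "distinct xs" "successively E (xs @ [hd xs])"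
    and "symp E" "\<And>x. \<not> E x x" "length xs \<ge> 2"
  shows "Z E \<alpha> (U - set xs) * sqrt (1 + exp (- \<alpha>) ^ 2) ^ length xs \<le> Z E \<alpha> U"
proof -
  let ?s = "exp (- \<alpha>)" and ?W = "Z E \<alpha> (U - set xs)"
  obtain a b ys where xs: "xs = a # b # ys"
    using assms(7) by (metis One_nat_def Suc_1 Suc_le_length_iff)
  show ?thesis
  proof (cases ys rule: rev_cases)
    case Nil
    have "sqrt (1 + ?s ^ 2) ^ length xs = jacobsthal (?s ^ 2) (Suc (length xs))"
      by (simp add: xs Nil)
    then show ?thesis
      using Z_diff_path_bound[OF assms(1-3) _ assms(5), of \<alpha>] assms(4) by (simp add: xs Nil)
  next
    case (snoc ws c)
    define \<xi> where "\<xi> = (1 + sqrt (1 + 4 * ?s ^ 2)) / 2"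
    define \<zeta> where "\<zeta> = (1 - sqrt (1 + 4 * ?s ^ 2)) / 2"
    have roots: "\<xi> + \<zeta> = 1" "\<xi> * \<zeta> = - (?s ^ 2)" "\<xi> \<ge> 1"
      by (auto simp: \<xi>_def \<zeta>_def field_simps power2_eq_square)
    have "sqrt (1 + ?s ^ 2) ^ length xs \<le> \<xi> ^ length xs + \<zeta> ^ length xs + ?s ^ length xs"
      using sqrt_power_le_lucas[OF _ roots] by simp
    then have "?W * sqrt (1 + ?s ^ 2) ^ length xs \<le> ?W * (\<xi> ^ length xs + \<zeta> ^ length xs + ?s ^ length xs)"
      by (rule mult_left_mono[OF _ Z_nonneg])
    also have "\<dots> \<le> Z E \<alpha> U"
      using Z_diff_cycle_lucas_bound[OF _ _ _ _ assms(5,6) roots(1,2), of U] assms(1-4)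
      by (simp add: xs snoc)
    finally show ?thesis .
  qed
qed

lemma divide_le_powr_half_of_mult_le:
  fixes a b c :: real
  assumes "0 < b" "0 < c" "a * sqrt c ^ k \<le> b"
  shows "a / b \<le> (1 / c) powr (real k / 2)"
proof -
  have "(1 / c) powr (real k / 2) = 1 / (c powr (1 / 2)) ^ k"
    using assms(2) by (simp add: powr_divide powr_powr_swap powr_realpow[symmetric] powr_powr)
  also have "\<dots> = 1 / sqrt c ^ k" using assms(2) by (simp add: powr_half_sqrt)
  finally have "(1 / c) powr (real k / 2) = 1 / sqrt c ^ k" .
  moreover have "sqrt c ^ k > 0" using assms(2) by simp
  ultimately show ?thesis using assms(1,3) by (simp add: field_simps)
qed

lemma simple_graphD:
  "simple_graph V E \<Longrightarrow> finite V \<and> symp E \<and> (\<forall>x. \<not> E x x)"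
  by (auto simp: simple_graph_def symp_def)

lemma sa_path_Z_bound:
  assumes "simple_graph V E" "sa_path V E xs"
  shows "Z E \<alpha> (V - set xs) * sqrt (1 + exp (- \<alpha>) ^ 2) ^ path_edges xs \<le> Z E \<alpha> V"
proof -
  let ?s = "exp (- \<alpha>)" and ?W = "Z E \<alpha> (V - set xs)"
  have "length xs = Suc (path_edges xs)" using assms(2) by (simp add: sa_path_def path_edges_def)
  then have "sqrt (1 + ?s ^ 2) ^ path_edges xs \<le> jacobsthal (?s ^ 2) (Suc (length xs))"
    using sqrt_power_le_jacobsthal[of "?s ^ 2" "path_edges xs"] by simp
  then have "?W * sqrt (1 + ?s ^ 2) ^ path_edges xs \<le> ?W * jacobsthal (?s ^ 2) (Suc (length xs))"
    by (intro mult_left_mono Z_nonneg)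
  also have "\<dots> \<le> Z E \<alpha> V"
    using Z_diff_path_bound[of V xs E \<alpha>] simple_graphD[OF assms(1)] assms(2)
    by (auto simp: sa_path_def successively_conv_nth)
  finally show ?thesis .
qed

lemma sa_cycle_Z_bound:
  assumes "simple_graph V E" "sa_cycle V E xs"
  shows "Z E \<alpha> (V - set xs) * sqrt (1 + exp (- \<alpha>) ^ 2) ^ cycle_edges xs \<le> Z E \<alpha> V"
proof -
  have G: "finite V" "symp E" "\<And>x. \<not> E x x" using simple_graphD[OF assms(1)] by auto
  have "xs \<noteq> []" "distinct xs" "set xs \<subseteq> V" "successively E xs" "E (last xs) (hd xs)"
    using assms(2) by (auto simp: sa_cycle_def sa_path_def successively_conv_nth)
  moreover from this have "successively E (xs @ [hd xs])" by (simp add: successively_append_iff)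
  moreover have "length xs \<ge> 2"
    using \<open>xs \<noteq> []\<close> \<open>E (last xs) (hd xs)\<close> G(3) by (cases xs) (auto simp: Suc_le_eq)
  ultimately show ?thesis
    using Z_diff_cycle_bound[OF G(1) _ _ _ G(2,3)] by (simp add: cycle_edges_def)
qed

theorem proposition3p1:
  fixes V :: "'a set" and E :: "'a \<Rightarrow> 'a \<Rightarrow> bool" and \<alpha> :: real and xs :: "'a list"
  assumes "simple_graph V E"
  shows "(sa_path V E xs \<longrightarrow>
            Z E \<alpha> (V - set xs) / Z E \<alpha> V \<le> (1 / (1 + exp (-2 * \<alpha>))) powr (real (path_edges xs) / 2))
       \<and> (sa_cycle V E xs \<longrightarrow>
            Z E \<alpha> (V - set xs) / Z E \<alpha> V \<le> (1 / (1 + exp (-2 * \<alpha>))) powr (real (cycle_edges xs) / 2))"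
proof -
  have "exp (-2 * \<alpha>) = exp (- \<alpha>) ^ 2" by (simp add: power2_eq_square flip: exp_add)
  moreover have "Z E \<alpha> V > 0" using Z_pos simple_graphD[OF assms] by blast
  ultimately show ?thesis
    using sa_path_Z_bound[OF assms] sa_cycle_Z_bound[OF assms]
    by (auto intro!: divide_le_powr_half_of_mult_le add_pos_nonneg)
qed

end
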